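(* Let $X$ be a finite set, let $\mathcal{F}$ be a closure system on $X$, let $\Sigma$ be the canonical direct basis of $\mathcal{F}$, and let $A\subseteq X$. Let $\mathcal{F}(A)=\mathcal{F}\cup\{F\cap A:F\in\mathcal{F}\}$. Then the modified body-building formula $\Sigma^*(A)$ is the canonical direct basis of the closure system $\mathcal{F}(A)$.
   Context: An implication on $X$ is $C\rightarrow d$ with $C\subseteq X$, $d\in X$; a set $Y$ satisfies it if $C\not\subseteq Y$ or $d\in Y$, otherwise it fails on $Y$. A set $\Sigma$ of implications is a basis of a closure system $\mathcal{F}$ if $\mathcal{F}$ is exactly the family of subsets of $X$ satisfying all implications of $\Sigma$. With $\varphi$ the closure operator of $\mathcal{F}$ ($\varphi(Y)$ = smallest member of $\mathcal{F}$ containing $Y$), the canonical direct basis of $\mathcal{F}$ is the set of all implications $C\rightarrow d$ such that $d\notin C$, $d\in\varphi(C)$, and $d\notin\varphi(C')$ for every proper subset $C'\subsetneq C$. Modified body-building formula: $\Sigma_t(A)$ is the set of implications of $\Sigma$ holding on $A$ and $\Sigma_f(A)$ the set of those failing on $A$ ($C\subseteq A$, $d\notin A$). For $(C\rightarrow d)\in\Sigma$ let $E_C=\{x\in X: \{x\}=G\setminus C \text{ for some implication } (G\rightarrow d)\in\Sigma\}$ (implications with the same consequent $d$). For $\sigma=(C\rightarrow d)\in\Sigma_f(A)$ let $\sigma^*(A)=\{C\cup\{x\}\rightarrow d: x\in X\setminus(A\cup\{d\}\cup E_C)\}$, and $\Sigma^*(A)=\Sigma_t(A)\cup\bigcup_{\sigma\in\Sigma_f(A)}\sigma^*(A)$.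 *)

theory Defs
  imports Main
begin

type_synonym 'a impl = "'a set \<times> 'a"

definition closure_system :: "'a set \<Rightarrow> 'a set set \<Rightarrow> bool" where
  "closure_system X F \<longleftrightarrow> F \<subseteq> Pow X \<and> X \<in> F \<and>
     (\<forall>S. S \<subseteq> F \<and> S \<noteq> {} \<longrightarrow> \<Inter>S \<in> F)"

definition clo :: "'a set set \<Rightarrow> 'a set \<Rightarrow> 'a set" where
  "clo F Y = \<Inter>{Z \<in> F. Y \<subseteq> Z}"

definition canonical_direct_basis :: "'a set \<Rightarrow> 'a set set \<Rightarrow> 'a impl set" where
  "canonical_direct_basis X F =
     {(C, d). C \<subseteq> X \<and> d \<in> X \<and> d \<notin> C \<and> d \<in> clo F C \<and>
              (\<forall>C'. C' \<subset> C \<longrightarrow> d \<notin> clo F C')}"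

definition holds_on :: "'a impl \<Rightarrow> 'a set \<Rightarrow> bool" where
  "holds_on \<sigma> Y \<longleftrightarrow> \<not> fst \<sigma> \<subseteq> Y \<or> snd \<sigma> \<in> Y"

definition Sigma_t :: "'a impl set \<Rightarrow> 'a set \<Rightarrow> 'a impl set" where
  "Sigma_t \<Sigma> A = {\<sigma> \<in> \<Sigma>. holds_on \<sigma> A}"

definition Sigma_f :: "'a impl set \<Rightarrow> 'a set \<Rightarrow> 'a impl set" where
  "Sigma_f \<Sigma> A = {\<sigma> \<in> \<Sigma>. \<not> holds_on \<sigma> A}"

definition E_set :: "'a set \<Rightarrow> 'a impl set \<Rightarrow> 'a set \<Rightarrow> 'a \<Rightarrow> 'a set" where
  "E_set X \<Sigma> C d = {x \<in> X. \<exists>G. (G, d) \<in> \<Sigma> \<and> {x} = G - C}"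

definition sigma_star :: "'a set \<Rightarrow> 'a impl set \<Rightarrow> 'a set \<Rightarrow> 'a impl \<Rightarrow> 'a impl set" where
  "sigma_star X \<Sigma> A \<sigma> =
     {(fst \<sigma> \<union> {x}, snd \<sigma>) | x. x \<in> X - (A \<union> {snd \<sigma>} \<union> E_set X \<Sigma> (fst \<sigma>) (snd \<sigma>))}"

definition body_building :: "'a set \<Rightarrow> 'a impl set \<Rightarrow> 'a set \<Rightarrow> 'a impl set" where
  "body_building X \<Sigma> A =
     Sigma_t \<Sigma> A \<union> (\<Union>\<sigma> \<in> Sigma_f \<Sigma> A. sigma_star X \<Sigma> A \<sigma>)"

end

theory Submission
  imports Defs
begin

text \<open>
  Adding the traces on A changes closures only for sets inside A: for Y \<subseteq> X,
  d lies in the new closure of Y iff d \<in> clo F Y and, when Y \<subseteq> A, also d \<in> A.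
  Hence an implication C \<rightarrow> d of \<Sigma> remains minimal for the new system exactly when it
  holds on A. A failing one (C \<subseteq> A, d \<notin> A) is no longer valid, and its minimal
  repairs are C \<union> {x} with x \<notin> A; such a premise is minimal unless some other
  G \<rightarrow> d of \<Sigma> already fits inside C \<union> {x}, which happens precisely when x \<in> E_C.
  Conversely, if a new minimal premise D of d is not one of \<Sigma>, some proper subset of D
  already yields d in F; every such subset lies in A while d \<notin> A, so D is a failing
  premise of \<Sigma> plus one point outside A.
\<close>

lemma clo_mono: "Y \<subseteq> Y' \<Longrightarrow> clo F Y \<subseteq> clo F Y'"
  by (auto simp: clo_def)

lemma clo_antimono_system: "F \<subseteq> F' \<Longrightarrow> clo F' Y \<subseteq> clo F Y"
  by (auto simp: clo_def)

lemma mem_clo_traces_iff: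
  assumes "X \<in> F" "Y \<subseteq> X"
  shows "d \<in> clo (F \<union> {Z \<inter> A | Z. Z \<in> F}) Y \<longleftrightarrow> d \<in> clo F Y \<and> (Y \<subseteq> A \<longrightarrow> d \<in> A)"
proof
  assume d: "d \<in> clo (F \<union> {Z \<inter> A | Z. Z \<in> F}) Y"
  then have "d \<in> clo F Y"
    using clo_antimono_system[of F "F \<union> {Z \<inter> A | Z. Z \<in> F}"] by blast
  moreover have "d \<in> A" if "Y \<subseteq> A"
  proof -
    have "X \<inter> A \<in> {Z \<in> F \<union> {Z \<inter> A | Z. Z \<in> F}. Y \<subseteq> Z}" using assms that by auto
    then show ?thesis using d unfolding clo_def by blast
  qed
  ultimately show "d \<in> clo F Y \<and> (Y \<subseteq> A \<longrightarrow> d \<in> A)" by blast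
next
  assume "d \<in> clo F Y \<and> (Y \<subseteq> A \<longrightarrow> d \<in> A)"
  then show "d \<in> clo (F \<union> {Z \<inter> A | Z. Z \<in> F}) Y"
    unfolding clo_def by blast
qed

lemma mem_canonical_direct_basis_iff:
  "(C, d) \<in> canonical_direct_basis X F \<longleftrightarrow>
     C \<subseteq> X \<and> d \<in> X \<and> d \<notin> C \<and> d \<in> clo F C \<and> (\<forall>C'. C' \<subset> C \<longrightarrow> d \<notin> clo F C')"
  by (simp add: canonical_direct_basis_def)

lemma canonical_direct_basis_premise_below:
  assumes "finite D" "D \<subseteq> X" "d \<in> X" "d \<notin> D" "d \<in> clo F D"
  obtains G where "G \<subseteq> D" "(G, d) \<in> canonical_direct_basis X F"
proof -
  have "finite {G. G \<subseteq> D \<and> d \<in> clo F G}" using assms(1) by simp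
  then obtain G where G: "G \<subseteq> D" "d \<in> clo F G"
      and min: "\<And>G'. G' \<subseteq> D \<Longrightarrow> d \<in> clo F G' \<Longrightarrow> G' \<subseteq> G \<Longrightarrow> G = G'"
    using finite_has_minimal2[of "{G. G \<subseteq> D \<and> d \<in> clo F G}" D] assms(5) by auto
  have "d \<notin> clo F G'" if "G' \<subset> G" for G'
    using min[of G'] that G(1) by blast
  then have "(G, d) \<in> canonical_direct_basis X F"
    unfolding mem_canonical_direct_basis_iff using G assms(2-4) by blast
  with G(1) show thesis by (rule that)
qed

lemma mem_body_building_iff:
  "(D, d) \<in> body_building X \<Sigma> A \<longleftrightarrow>
     (D, d) \<in> \<Sigma> \<and> (\<not> D \<subseteq> A \<or> d \<in> A) \<or>
     (\<exists>C x. (C, d) \<in> \<Sigma> \<and> C \<subseteq> A \<and> d \<notin> A \<and> D = C \<union> {x} \<and>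
            x \<in> X - A - {d} - E_set X \<Sigma> C d)"
  unfolding body_building_def Sigma_t_def Sigma_f_def sigma_star_def holds_on_def
  by auto

lemma canonical_direct_basis_traces_if_holds:
  assumes "X \<in> F" "(D, d) \<in> canonical_direct_basis X F" "\<not> D \<subseteq> A \<or> d \<in> A"
  shows "(D, d) \<in> canonical_direct_basis X (F \<union> {Z \<inter> A | Z. Z \<in> F})"
proof -
  have D: "D \<subseteq> X" "d \<in> X" "d \<notin> D" "d \<in> clo F D" "\<forall>C'. C' \<subset> D \<longrightarrow> d \<notin> clo F C'"
    using assms(2) unfolding mem_canonical_direct_basis_iff by auto
  have "d \<in> clo (F \<union> {Z \<inter> A | Z. Z \<in> F}) D"
    using mem_clo_traces_iff[OF assms(1) D(1)] D(4) assms(3) by blast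
  moreover have "d \<notin> clo (F \<union> {Z \<inter> A | Z. Z \<in> F}) C'" if "C' \<subset> D" for C'
    using D(5) that clo_antimono_system[of F "F \<union> {Z \<inter> A | Z. Z \<in> F}" C'] by blast
  ultimately show ?thesis unfolding mem_canonical_direct_basis_iff using D by blast
qed

lemma canonical_direct_basis_traces_if_fails:
  assumes "finite X" "X \<in> F"
    and \<Sigma>: "\<Sigma> = canonical_direct_basis X F"
    and C: "(C, d) \<in> \<Sigma>" "C \<subseteq> A" "d \<notin> A"
    and x: "x \<in> X - A - {d} - E_set X \<Sigma> C d"
  shows "(C \<union> {x}, d) \<in> canonical_direct_basis X (F \<union> {Z \<inter> A | Z. Z \<in> F})"
proof -
  let ?D = "C \<union> {x}"
  have CX: "C \<subseteq> X" and dX: "d \<in> X" and dC: "d \<notin> C" and dclo: "d \<in> clo F C"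
    and Cmin: "\<And>C'. C' \<subset> C \<Longrightarrow> d \<notin> clo F C'"
    using C(1)[unfolded \<Sigma> mem_canonical_direct_basis_iff] by auto
  have DX: "?D \<subseteq> X" and dD: "d \<notin> ?D" using CX dC x by auto
  have "d \<in> clo F ?D" using dclo clo_mono[of C ?D F] by blast
  then have "d \<in> clo (F \<union> {Z \<inter> A | Z. Z \<in> F}) ?D"
    using mem_clo_traces_iff[OF assms(2) DX] x by blast
  moreover have "d \<notin> clo (F \<union> {Z \<inter> A | Z. Z \<in> F}) C'" if C'D: "C' \<subset> ?D" for C'
  proof
    assume "d \<in> clo (F \<union> {Z \<inter> A | Z. Z \<in> F}) C'"
    moreover have C'X: "C' \<subseteq> X" using C'D DX by auto
    ultimately have dC': "d \<in> clo F C'" and "\<not> C' \<subseteq> A"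
      using mem_clo_traces_iff[OF assms(2) C'X] C(3) by auto
    then have xC': "x \<in> C'" using C'D C(2) by auto
    have "d \<notin> C'" using C'D dD by auto
    then obtain G where G: "G \<subseteq> C'" "(G, d) \<in> \<Sigma>"
      using canonical_direct_basis_premise_below[OF finite_subset[OF C'X assms(1)] C'X dX _ dC']
      unfolding \<Sigma> by metis
    show False
    proof (cases "x \<in> G")
      case True
      then have "G - C = {x}" using G(1) C'D C(2) x by auto
      then have "x \<in> E_set X \<Sigma> C d" unfolding E_set_def using G(2) x by auto
      then show False using x by simp
    next
      case False
      then have "G \<subset> C" using G(1) C'D xC' x by auto
      moreover have "d \<in> clo F G" using G(2)[unfolded \<Sigma> mem_canonical_direct_basis_iff] by simp
      ultimately show False using Cmin by blast
    qed
  qed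
  ultimately show ?thesis unfolding mem_canonical_direct_basis_iff using DX dX dD by blast
qed

lemma body_building_if_canonical_direct_basis_traces:
  assumes "finite X" "X \<in> F"
    and \<Sigma>: "\<Sigma> = canonical_direct_basis X F"
    and D: "(D, d) \<in> canonical_direct_basis X (F \<union> {Z \<inter> A | Z. Z \<in> F})"
  shows "(D, d) \<in> body_building X \<Sigma> A"
proof -
  have DX: "D \<subseteq> X" and dX: "d \<in> X" and dD: "d \<notin> D"
    and dclo: "d \<in> clo (F \<union> {Z \<inter> A | Z. Z \<in> F}) D"
    and min: "\<And>C'. C' \<subset> D \<Longrightarrow> d \<notin> clo (F \<union> {Z \<inter> A | Z. Z \<in> F}) C'"
    using D unfolding mem_canonical_direct_basis_iff by auto
  have dF: "d \<in> clo F D" and DA: "D \<subseteq> A \<longrightarrow> d \<in> A"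
    using mem_clo_traces_iff[OF assms(2) DX] dclo by auto
  have below_in_A: "C' \<subseteq> A \<and> d \<notin> A" if C': "C' \<subset> D" "d \<in> clo F C'" for C'
  proof -
    have "C' \<subseteq> X" using C'(1) DX by auto
    then show ?thesis using min[OF C'(1)] C'(2) mem_clo_traces_iff[OF assms(2)] by blast
  qed
  have premise_in_\<Sigma>: "(G, d) \<in> \<Sigma> \<Longrightarrow> d \<in> clo F G" for G
    unfolding \<Sigma> mem_canonical_direct_basis_iff by simp
  show ?thesis
  proof (cases "(D, d) \<in> \<Sigma>")
    case True
    then show ?thesis using DA unfolding mem_body_building_iff by blast
  next
    case False
    then obtain C' where C': "C' \<subset> D" "d \<in> clo F C'"
      using DX dX dD dF unfolding \<Sigma> mem_canonical_direct_basis_iff by blast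
    have C'X: "C' \<subseteq> X" using C'(1) DX by auto
    have "d \<notin> C'" using C'(1) dD by auto
    then obtain G where G: "G \<subseteq> C'" "(G, d) \<in> \<Sigma>"
      using canonical_direct_basis_premise_below[OF finite_subset[OF C'X assms(1)] C'X dX _ C'(2)]
      unfolding \<Sigma> by metis
    have GD: "G \<subset> D" using G(1) C'(1) by auto
    have Gclo: "d \<in> clo F G" using premise_in_\<Sigma>[OF G(2)] .
    have GA: "G \<subseteq> A" and dA: "d \<notin> A" using below_in_A[OF GD Gclo] by auto
    then obtain x where x: "x \<in> D" "x \<notin> A" using DA by blast
    have Deq: "D = G \<union> {x}"
    proof (rule ccontr)
      assume "D \<noteq> G \<union> {x}"
      then have "G \<union> {x} \<subset> D" using GD x by auto
      moreover have "d \<in> clo F (G \<union> {x})" using Gclo clo_mono[of G "G \<union> {x}" F] by auto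
      ultimately show False using below_in_A x(2) by blast
    qed
    have "x \<notin> E_set X \<Sigma> G d"
    proof
      assume "x \<in> E_set X \<Sigma> G d"
      then obtain G' where G': "(G', d) \<in> \<Sigma>" "{x} = G' - G" unfolding E_set_def by auto
      then have "G' \<subset> D" using Deq False by auto
      then show False using below_in_A[OF _ premise_in_\<Sigma>[OF G'(1)]] G'(2) x(2) by blast
    qed
    moreover have "x \<in> X - A - {d}" using x DX dD by auto
    ultimately show ?thesis
      unfolding mem_body_building_iff using G(2) GA dA Deq by blast
  qed
qed

theorem mainTheorem2:
  fixes X :: "'a set" and F :: "'a set set" and \<Sigma> :: "'a impl set" and A :: "'a set"
  assumes "finite X"
    and "closure_system X F"
    and "\<Sigma> = canonical_direct_basis X F"
    and "A \<subseteq> X"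
  shows "body_building X \<Sigma> A = canonical_direct_basis X (F \<union> {Y \<inter> A | Y. Y \<in> F})"
proof (rule set_eqI, clarify)
  have XF: "X \<in> F" using assms(2) by (simp add: closure_system_def)
  fix D d
  show "(D, d) \<in> body_building X \<Sigma> A \<longleftrightarrow>
        (D, d) \<in> canonical_direct_basis X (F \<union> {Y \<inter> A | Y. Y \<in> F})"
  proof
    assume "(D, d) \<in> body_building X \<Sigma> A"
    then consider "(D, d) \<in> \<Sigma>" "\<not> D \<subseteq> A \<or> d \<in> A"
      | C x where "(C, d) \<in> \<Sigma>" "C \<subseteq> A" "d \<notin> A" "D = C \<union> {x}"
          "x \<in> X - A - {d} - E_set X \<Sigma> C d"
      unfolding mem_body_building_iff by blast
    then show "(D, d) \<in> canonical_direct_basis X (F \<union> {Y \<inter> A | Y. Y \<in> F})"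
    proof cases
      case 1
      then show ?thesis
        using canonical_direct_basis_traces_if_holds[OF XF] assms(3) by blast
    next
      case 2
      then show ?thesis
        using canonical_direct_basis_traces_if_fails[OF assms(1) XF assms(3)] by blast
    qed
  next
    assume "(D, d) \<in> canonical_direct_basis X (F \<union> {Y \<inter> A | Y. Y \<in> F})"
    then show "(D, d) \<in> body_building X \<Sigma> A"
      by (rule body_building_if_canonical_direct_basis_traces[OF assms(1) XF assms(3)])
  qed
qed

end
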